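(* Let $n\ge 1$ and consider a (categorical) extended linear classifier with features $e_1,\ldots,e_n$, where $e_j\in\{1,\ldots,d_j\}$, real weights $w_0$ and $v_j^r$ ($1\le j\le n$, $1\le r\le d_j$), score $\nu(\mathbf e)=w_0+\sum_{j=1}^n v_j^{e_j}$ and decision $\tau(\mathbf e)=\oplus$ iff $\nu(\mathbf e)>0$. Let $\mathbf a=(a_1,\ldots,a_n)$ be an instance with $\nu(\mathbf a)>0$, and define $\delta_j$ and $\Phi$ as in the context. Let $\langle l_1,\ldots,l_n\rangle$ be an ordering of $\{1,\ldots,n\}$ such that $\delta_{l_1}\ge\delta_{l_2}\ge\cdots\ge\delta_{l_n}$. Then there exists a (unique) $k\in\{0,\ldots,n\}$ with $\sum_{r=1}^{k}\delta_{l_r}>\Phi$ and $\sum_{r=1}^{k-1}\delta_{l_r}\le\Phi$ (where for $k=0$ the second condition is vacuous), and for $\mathcal P=\{l_1,\ldots,l_k\}$: (i) for every $\mathbf e$ in the feature space, if $e_j=a_j$ for all $j\in\mathcal P$ then $\nu(\mathbf e)>0$; and (ii) $\mathcal P$ is an optimal solution of the problem: minimize $\sum_{i=1}^n p_i$ subject to $\sum_{i=1}^n\delta_i p_i>\Phi$, $p_i\in\{0,1\}$ (identifying $\mathcal P$ with $p_i=1$ iff $i\in\mathcal P$). In particular $\mathcal P$ is a PI-explanation of minimum cardinality.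
   Context: Feature space: $\mathbb E=\prod_{j=1}^n\{1,\ldots,d_j\}$. For the instance $\mathbf a$, define $v_j^{\omega}=\min_{1\le r\le d_j}v_j^r$, $\delta_j=v_j^{a_j}-v_j^{\omega}\ (\ge 0)$, $\Gamma=\nu(\mathbf a)=w_0+\sum_j v_j^{a_j}$, and $\Phi=\sum_{j=1}^n\delta_j-\Gamma$ (so $-\Phi=w_0+\sum_j v_j^{\omega}$ is the worst-case score). A PI-explanation of the prediction $\tau(\mathbf a)=\oplus$ is a subset-minimal set $\mathcal P\subseteq\{1,\ldots,n\}$ such that for all $\mathbf e\in\mathbb E$, $\bigwedge_{j\in\mathcal P}(e_j=a_j)$ implies $\tau(\mathbf e)=\oplus$. *)

theory Defs
  imports Complex_Main "HOL-Library.FuncSet"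
begin

definition feature_space :: "nat \<Rightarrow> (nat \<Rightarrow> nat) \<Rightarrow> (nat \<Rightarrow> nat) set" where
  "feature_space n d = PiE {1..n} (\<lambda>j. {1..d j})"

definition score :: "nat \<Rightarrow> real \<Rightarrow> (nat \<Rightarrow> nat \<Rightarrow> real) \<Rightarrow> (nat \<Rightarrow> nat) \<Rightarrow> real" where
  "score n w0 v e = w0 + (\<Sum>j=1..n. v j (e j))"

definition v_omega :: "(nat \<Rightarrow> nat) \<Rightarrow> (nat \<Rightarrow> nat \<Rightarrow> real) \<Rightarrow> nat \<Rightarrow> real" where
  "v_omega d v j = Min ((v j) ` {1..d j})"

definition delta :: "(nat \<Rightarrow> nat) \<Rightarrow> (nat \<Rightarrow> nat \<Rightarrow> real) \<Rightarrow> (nat \<Rightarrow> nat) \<Rightarrow> nat \<Rightarrow> real" where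
  "delta d v a j = v j (a j) - v_omega d v j"

definition Phi :: "nat \<Rightarrow> (nat \<Rightarrow> nat) \<Rightarrow> real \<Rightarrow> (nat \<Rightarrow> nat \<Rightarrow> real) \<Rightarrow> (nat \<Rightarrow> nat) \<Rightarrow> real" where
  "Phi n d w0 v a = (\<Sum>j=1..n. delta d v a j) - score n w0 v a"

definition sufficient ::
  "nat \<Rightarrow> (nat \<Rightarrow> nat) \<Rightarrow> real \<Rightarrow> (nat \<Rightarrow> nat \<Rightarrow> real) \<Rightarrow> (nat \<Rightarrow> nat) \<Rightarrow> nat set \<Rightarrow> bool" where
  "sufficient n d w0 v a P \<longleftrightarrow>
     (\<forall>e\<in>feature_space n d. (\<forall>j\<in>P. e j = a j) \<longrightarrow> score n w0 v e > 0)"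

definition PI_explanation ::
  "nat \<Rightarrow> (nat \<Rightarrow> nat) \<Rightarrow> real \<Rightarrow> (nat \<Rightarrow> nat \<Rightarrow> real) \<Rightarrow> (nat \<Rightarrow> nat) \<Rightarrow> nat set \<Rightarrow> bool" where
  "PI_explanation n d w0 v a P \<longleftrightarrow>
     P \<subseteq> {1..n} \<and> sufficient n d w0 v a P \<and>
     (\<forall>Q. Q \<subset> P \<longrightarrow> \<not> sufficient n d w0 v a Q)"

end

theory Submission
  imports Defs
begin

text \<open>Fixing the features in Q and setting every other feature to its worst value gives the
  score \<open>\<Sum>\<delta>(Q) - \<Phi>\<close>, and no completion scores lower. Hence Q is sufficient exactly when
  \<open>\<Sum>\<delta>(Q) > \<Phi>\<close>, a knapsack-type condition whose smallest solutions are obtained greedily: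
  among sets of a given cardinality the sum of \<open>\<delta>\<close> is largest on the prefixes
  \<open>{l\<^sub>1, \<dots>, l\<^sub>k}\<close> of the sorted order.\<close>

lemma sum_le_initial_segment_if_antitone:
  fixes g :: "nat \<Rightarrow> 'a::linordered_idom"
  assumes antitone: "\<And>r s. r \<in> {1..n} \<Longrightarrow> s \<in> {1..n} \<Longrightarrow> r \<le> s \<Longrightarrow> g s \<le> g r"
    and R: "R \<subseteq> {1..n}"
  shows "sum g R \<le> (\<Sum>r=1..card R. g r)"
proof -
  define m where "m = card R"
  have fin: "finite R" using R finite_subset by blast
  have mn: "m \<le> n" using card_mono[OF _ R] m_def by simp
  define A where "A = R - {1..m}"
  define B where "B = {1..m} - R"
  have "card R = card (R \<inter> {1..m}) + card A"
    unfolding A_def using fin by (metis card_Int_Diff finite_Int)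
  moreover have "m = card (R \<inter> {1..m}) + card B"
    unfolding B_def by (metis Int_commute card_Int_Diff card_atLeastAtMost diff_Suc_1 finite_atLeastAtMost)
  ultimately have card_AB: "card A = card B" using m_def by simp
  \<comment> \<open>exchange argument: the elements of A all lie above m, those of B at or below m\<close>
  have "sum g A \<le> (\<Sum>x\<in>A. g m)"
  proof (rule sum_mono)
    fix x assume x: "x \<in> A"
    then have "0 < m" using fin by (auto simp: A_def m_def card_gt_0_iff)
    then show "g x \<le> g m" using x R mn antitone[of m x] by (auto simp: A_def)
  qed
  also have "\<dots> = (\<Sum>x\<in>B. g m)" using card_AB by simp
  also have "\<dots> \<le> sum g B"
  proof (rule sum_mono)
    fix x assume "x \<in> B"
    then show "g m \<le> g x" using mn antitone[of x m] by (auto simp: B_def)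
  qed
  finally have "sum g A \<le> sum g B" .
  moreover have "sum g R = sum g (R \<inter> {1..m}) + sum g A"
    unfolding A_def using fin by (metis sum.Int_Diff)
  moreover have "sum g {1..m} = sum g (R \<inter> {1..m}) + sum g B"
    unfolding B_def by (metis Int_commute finite_atLeastAtMost sum.Int_Diff)
  ultimately show ?thesis using m_def by simp
qed

lemma sum_le_sorted_prefix_sum:
  fixes f :: "nat \<Rightarrow> 'a::linordered_idom"
  assumes l: "bij_betw l {1..n} {1..n}"
    and sorted: "\<And>r s. r \<in> {1..n} \<Longrightarrow> s \<in> {1..n} \<Longrightarrow> r \<le> s \<Longrightarrow> f (l s) \<le> f (l r)"
    and Q: "Q \<subseteq> {1..n}"
  shows "sum f Q \<le> (\<Sum>r=1..card Q. f (l r))"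
proof -
  define R where "R = {r\<in>{1..n}. l r \<in> Q}"
  have inj: "inj_on l R" using l unfolding R_def bij_betw_def by (auto intro: inj_on_subset)
  have "Q \<subseteq> l ` {1..n}" using l Q by (simp add: bij_betw_def)
  then have img: "l ` R = Q" unfolding R_def by blast
  have "sum f Q = sum (f \<circ> l) R" using sum.reindex[OF inj, of f] img by simp
  also have "\<dots> \<le> (\<Sum>r=1..card R. (f \<circ> l) r)"
    by (rule sum_le_initial_segment_if_antitone[where n = n]) (use sorted in \<open>auto simp: R_def\<close>)
  finally show ?thesis using card_image[OF inj] img by simp
qed

lemma threshold_index:
  fixes S :: "nat \<Rightarrow> 'a::linorder"
  assumes mono: "\<forall>i j. i \<le> j \<longrightarrow> j \<le> n \<longrightarrow> S i \<le> S j" and reached: "c < S n"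
  obtains k where "k \<le> n" and "c < S k" and "\<And>i. i < k \<Longrightarrow> S i \<le> c"
    and "\<And>k'. k' \<le> n \<Longrightarrow> c < S k' \<Longrightarrow> (1 \<le> k' \<longrightarrow> S (k' - 1) \<le> c) \<Longrightarrow> k' = k"
proof
  define k where "k = (LEAST k. c < S k)"
  show kn: "k \<le> n" unfolding k_def using reached by (rule Least_le)
  show Sk: "c < S k" unfolding k_def using reached by (rule LeastI)
  show below: "S i \<le> c" if "i < k" for i
    using not_less_Least[OF that[unfolded k_def]] by (simp add: k_def)
  fix k' assume k': "k' \<le> n" "c < S k'" "1 \<le> k' \<longrightarrow> S (k' - 1) \<le> c"
  have "k \<le> k'" unfolding k_def using k' by (intro Least_le)
  moreover have "\<not> k < k'"
  proof
    assume "k < k'"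
    then have "S k \<le> S (k' - 1)" using k' mono by auto
    then show False using k' Sk \<open>k < k'\<close> by auto
  qed
  ultimately show "k' = k" by simp
qed

lemma sorted_prefix_image:
  fixes f :: "nat \<Rightarrow> 'a::comm_monoid_add"
  assumes l: "bij_betw l {1..n} {1..n}" and k: "k \<le> n"
  shows "l ` {1..k} \<subseteq> {1..n}" and "card (l ` {1..k}) = k"
    and "sum f (l ` {1..k}) = (\<Sum>r=1..k. f (l r))"
proof -
  have inj: "inj_on l {1..k}" using l k by (auto simp: bij_betw_def intro: inj_on_subset)
  show "l ` {1..k} \<subseteq> {1..n}" using l k by (auto simp: bij_betw_def)
  show "card (l ` {1..k}) = k" using card_image[OF inj] by simp
  show "sum f (l ` {1..k}) = (\<Sum>r=1..k. f (l r))" using sum.reindex[OF inj] by simp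
qed

lemma greedy_prefix_min_card:
  fixes f :: "nat \<Rightarrow> 'a::linordered_idom"
  assumes l: "bij_betw l {1..n} {1..n}"
    and sorted: "\<forall>r\<in>{1..n}. \<forall>s\<in>{1..n}. r \<le> s \<longrightarrow> f (l r) \<ge> f (l s)"
    and nonneg: "\<forall>j\<in>{1..n}. 0 \<le> f j"
    and reached: "c < sum f {1..n}"
  obtains k where "k \<le> n" and "c < (\<Sum>r=1..k. f (l r))"
    and "1 \<le> k \<longrightarrow> (\<Sum>r=1..k-1. f (l r)) \<le> c"
    and "\<And>k'. k' \<le> n \<Longrightarrow> c < (\<Sum>r=1..k'. f (l r))
           \<Longrightarrow> (1 \<le> k' \<longrightarrow> (\<Sum>r=1..k'-1. f (l r)) \<le> c) \<Longrightarrow> k' = k"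
    and "\<And>Q. Q \<subseteq> {1..n} \<Longrightarrow> c < sum f Q \<Longrightarrow> k \<le> card Q"
proof -
  define S where "S k = (\<Sum>r=1..k. f (l r))" for k
  have l_in: "l r \<in> {1..n}" if "r \<in> {1..n}" for r using l that by (auto simp: bij_betw_def)
  have S_mono: "\<forall>i j. i \<le> j \<longrightarrow> j \<le> n \<longrightarrow> S i \<le> S j"
    unfolding S_def using nonneg l_in by (auto intro!: sum_mono2)
  have "S n = sum f {1..n}" unfolding S_def using sum.reindex_bij_betw[OF l] by simp
  then have reached_S: "c < S n" using reached by simp
  obtain k where k: "k \<le> n" "c < S k" "\<And>i. i < k \<Longrightarrow> S i \<le> c"
    and unique: "\<And>k'. k' \<le> n \<Longrightarrow> c < S k' \<Longrightarrow> (1 \<le> k' \<longrightarrow> S (k' - 1) \<le> c) \<Longrightarrow> k' = k"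
    by (fact threshold_index[OF S_mono reached_S])
  have min_card: "k \<le> card Q" if Q: "Q \<subseteq> {1..n}" and "c < sum f Q" for Q
  proof (rule ccontr)
    assume "\<not> k \<le> card Q"
    then have "S (card Q) \<le> c" using k(3) by simp
    moreover have "sum f Q \<le> S (card Q)"
      unfolding S_def using sorted Q by (intro sum_le_sorted_prefix_sum[OF l]) auto
    ultimately show False using \<open>c < sum f Q\<close> by simp
  qed
  show thesis
  proof (rule that[OF k(1) _ _ _ min_card])
    show "c < (\<Sum>r=1..k. f (l r))" using k(2) by (simp add: S_def)
    show "1 \<le> k \<longrightarrow> (\<Sum>r=1..k-1. f (l r)) \<le> c" using k(3)[of "k - 1"] by (simp add: S_def)
    show "k' = k" if "k' \<le> n" "c < (\<Sum>r=1..k'. f (l r))" "1 \<le> k' \<longrightarrow> (\<Sum>r=1..k'-1. f (l r)) \<le> c"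
      for k'
      using unique that by (simp add: S_def)
  qed
qed

lemma sum_mult_zero_one:
  fixes p :: "'a \<Rightarrow> 'b::semiring_1"
  assumes "finite A" and "\<forall>i\<in>A. p i \<in> {0, 1}"
  shows "(\<Sum>i\<in>A. f i * p i) = sum f {i\<in>A. p i = 1}"
  using assms by (auto simp: sum.inter_filter intro!: sum.cong)

lemma sum_mult_indicator:
  fixes f :: "'a \<Rightarrow> 'b::semiring_1"
  assumes "finite A" and "P \<subseteq> A"
  shows "(\<Sum>i\<in>A. f i * (if i \<in> P then 1 else 0)) = sum f P"
  using assms by (simp add: sum.If_cases Int_absorb1 if_distrib)

lemma zero_one_solution_card_ge:
  fixes f p :: "'a \<Rightarrow> 'b::linordered_semidom"
  assumes A: "finite A" and P: "P \<subseteq> A"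
    and min: "\<And>Q. Q \<subseteq> A \<Longrightarrow> c < sum f Q \<Longrightarrow> card P \<le> card Q"
    and p: "\<forall>i\<in>A. p i \<in> {0, 1}" and feasible: "c < (\<Sum>i\<in>A. f i * p i)"
  shows "(\<Sum>i\<in>A. if i \<in> P then 1 else 0) \<le> (\<Sum>i\<in>A. p i)"
proof -
  define Q where "Q = {i\<in>A. p i = 1}"
  have "card P \<le> card Q"
    using feasible sum_mult_zero_one[OF A p] by (intro min) (auto simp: Q_def)
  moreover have "(\<Sum>i\<in>A. p i) = of_nat (card Q)"
    using sum_mult_zero_one[OF A p, of "\<lambda>_. 1"] by (simp add: Q_def)
  moreover have "(\<Sum>i\<in>A. if i \<in> P then 1 else 0 :: 'b) = of_nat (card P)"
    using sum_mult_indicator[OF A P, of "\<lambda>_. 1 :: 'b"] by simp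
  ultimately show ?thesis by simp
qed

lemma v_omega_le: "r \<in> {1..d j} \<Longrightarrow> v_omega d v j \<le> v j r"
  unfolding v_omega_def by (rule Min_le) auto

lemma v_omega_attained:
  assumes "d j \<ge> 1"
  shows "\<exists>r\<in>{1..d j}. v j r = v_omega d v j"
proof -
  have "v_omega d v j \<in> v j ` {1..d j}"
    unfolding v_omega_def using assms by (intro Min_in) auto
  then show ?thesis by auto
qed

lemma delta_nonneg:
  assumes "a \<in> feature_space n d" and "j \<in> {1..n}"
  shows "delta d v a j \<ge> 0"
proof -
  have "a j \<in> {1..d j}" using assms by (auto simp: feature_space_def)
  then show ?thesis by (simp add: delta_def v_omega_le)
qed

lemma score_agreeing_on:
  assumes Q: "Q \<subseteq> {1..n}" and agree: "\<forall>j\<in>Q. e j = a j"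
  shows "score n w0 v e = sum (delta d v a) Q - Phi n d w0 v a
           + (\<Sum>j\<in>{1..n} - Q. v j (e j) - v_omega d v j)"
proof -
  have split: "sum h {1..n} = sum h Q + sum h ({1..n} - Q)" for h :: "nat \<Rightarrow> real"
    using Q by (simp add: sum.subset_diff)
  have "sum (\<lambda>j. v j (e j)) Q = sum (\<lambda>j. v j (a j)) Q" using agree by simp
  then show ?thesis
    unfolding score_def Phi_def delta_def
    using split[of "\<lambda>j. v j (e j)"] split[of "\<lambda>j. v j (a j)"] split[of "v_omega d v"]
    by (simp add: sum_subtractf)
qed

lemma sufficient_iff_Phi_less_sum_delta:
  assumes d: "\<forall>j\<in>{1..n}. d j \<ge> 1" and a: "a \<in> feature_space n d" and Q: "Q \<subseteq> {1..n}"
  shows "sufficient n d w0 v a Q \<longleftrightarrow> Phi n d w0 v a < sum (delta d v a) Q"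
proof -
  have score_eq: "score n w0 v e = sum (delta d v a) Q - Phi n d w0 v a
      + (\<Sum>j\<in>{1..n} - Q. v j (e j) - v_omega d v j)" if "\<forall>j\<in>Q. e j = a j" for e
    using Q that by (rule score_agreeing_on)
  show ?thesis
  proof
    have "\<forall>j\<in>{1..n}. \<exists>r. r \<in> {1..d j} \<and> v j r = v_omega d v j"
      using d v_omega_attained by blast
    then obtain m where m: "\<forall>j\<in>{1..n}. m j \<in> {1..d j} \<and> v j (m j) = v_omega d v j"
      by (auto dest: bchoice)
    define e where "e = restrict (\<lambda>j. if j \<in> Q then a j else m j) {1..n}"
    have "e \<in> feature_space n d"
      using a m unfolding e_def feature_space_def by auto
    moreover have agree: "\<forall>j\<in>Q. e j = a j" using Q by (auto simp: e_def)
    moreover assume "sufficient n d w0 v a Q"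
    ultimately have "score n w0 v e > 0" unfolding sufficient_def by blast
    moreover have "(\<Sum>j\<in>{1..n} - Q. v j (e j) - v_omega d v j) = 0"
      using m by (simp add: e_def)
    ultimately show "Phi n d w0 v a < sum (delta d v a) Q" using score_eq[OF agree] by simp
  next
    assume less: "Phi n d w0 v a < sum (delta d v a) Q"
    show "sufficient n d w0 v a Q"
      unfolding sufficient_def
    proof (intro ballI impI)
      fix e assume e: "e \<in> feature_space n d" and agree: "\<forall>j\<in>Q. e j = a j"
      have "e j \<in> {1..d j}" if "j \<in> {1..n}" for j
        using e that unfolding feature_space_def by (rule PiE_mem)
      then have "0 \<le> (\<Sum>j\<in>{1..n} - Q. v j (e j) - v_omega d v j)"
        by (intro sum_nonneg) (simp add: v_omega_le)
      then show "score n w0 v e > 0" using score_eq[OF agree] less by simp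
    qed
  qed
qed

lemma PI_explanation_of_min_card_sufficient:
  assumes P: "P \<subseteq> {1..n}" and suff: "sufficient n d w0 v a P"
    and min: "\<And>Q. Q \<subseteq> {1..n} \<Longrightarrow> sufficient n d w0 v a Q \<Longrightarrow> card P \<le> card Q"
  shows "PI_explanation n d w0 v a P"
    and "\<And>Q. PI_explanation n d w0 v a Q \<Longrightarrow> card P \<le> card Q"
proof -
  have "\<not> sufficient n d w0 v a Q" if "Q \<subset> P" for Q
    using min[of Q] psubset_card_mono[OF finite_subset[OF P] that] that P by auto
  then show "PI_explanation n d w0 v a P" using P suff by (simp add: PI_explanation_def)
  show "card P \<le> card Q" if "PI_explanation n d w0 v a Q" for Q
    using that min by (simp add: PI_explanation_def)
qed

theorem proposition1:
  fixes n :: nat and d :: "nat \<Rightarrow> nat" and w0 :: real and v :: "nat \<Rightarrow> nat \<Rightarrow> real"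
    and a :: "nat \<Rightarrow> nat" and l :: "nat \<Rightarrow> nat"
  assumes n: "n \<ge> 1"
    and d: "\<forall>j\<in>{1..n}. d j \<ge> 1"
    and a: "a \<in> feature_space n d"
    and pos: "score n w0 v a > 0"
    and l_bij: "bij_betw l {1..n} {1..n}"
    and l_sorted: "\<forall>r\<in>{1..n}. \<forall>s\<in>{1..n}. r \<le> s \<longrightarrow> delta d v a (l r) \<ge> delta d v a (l s)"
  shows "\<exists>k. k \<le> n
     \<and> (\<Sum>r=1..k. delta d v a (l r)) > Phi n d w0 v a
     \<and> (k \<ge> 1 \<longrightarrow> (\<Sum>r=1..k-1. delta d v a (l r)) \<le> Phi n d w0 v a)
     \<and> (\<forall>k'. k' \<le> n \<and> (\<Sum>r=1..k'. delta d v a (l r)) > Phi n d w0 v a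
            \<and> (k' \<ge> 1 \<longrightarrow> (\<Sum>r=1..k'-1. delta d v a (l r)) \<le> Phi n d w0 v a) \<longrightarrow> k' = k)
     \<and> (let P = l ` {1..k} in
          (\<forall>e\<in>feature_space n d. (\<forall>j\<in>P. e j = a j) \<longrightarrow> score n w0 v e > 0)
        \<and> (\<Sum>i=1..n. delta d v a i * (if i \<in> P then 1 else 0)) > Phi n d w0 v a
        \<and> (\<forall>p :: nat \<Rightarrow> real. (\<forall>i\<in>{1..n}. p i \<in> {0, 1})
              \<and> (\<Sum>i=1..n. delta d v a i * p i) > Phi n d w0 v a
              \<longrightarrow> (\<Sum>i=1..n. (if i \<in> P then 1 else 0)) \<le> (\<Sum>i=1..n. p i))
        \<and> PI_explanation n d w0 v a P
        \<and> (\<forall>Q. PI_explanation n d w0 v a Q \<longrightarrow> card P \<le> card Q))"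
proof -
  define \<delta> where "\<delta> = delta d v a"
  define \<Phi> where "\<Phi> = Phi n d w0 v a"
  have nonneg: "\<forall>j\<in>{1..n}. 0 \<le> \<delta> j" using delta_nonneg[OF a] by (simp add: \<delta>_def)
  have reached: "\<Phi> < sum \<delta> {1..n}" using pos by (simp add: \<Phi>_def \<delta>_def Phi_def)
  obtain k where kn: "k \<le> n" and threshold: "\<Phi> < (\<Sum>r=1..k. \<delta> (l r))"
      "1 \<le> k \<longrightarrow> (\<Sum>r=1..k-1. \<delta> (l r)) \<le> \<Phi>"
      "\<And>k'. k' \<le> n \<Longrightarrow> \<Phi> < (\<Sum>r=1..k'. \<delta> (l r))
         \<Longrightarrow> (1 \<le> k' \<longrightarrow> (\<Sum>r=1..k'-1. \<delta> (l r)) \<le> \<Phi>) \<Longrightarrow> k' = k"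
    and min_card: "\<And>Q. Q \<subseteq> {1..n} \<Longrightarrow> \<Phi> < sum \<delta> Q \<Longrightarrow> k \<le> card Q"
    by (fact greedy_prefix_min_card[OF l_bij l_sorted[folded \<delta>_def] nonneg reached])
  define P where "P = l ` {1..k}"
  note P = sorted_prefix_image[OF l_bij kn, folded P_def]
  have sufficient: "sufficient n d w0 v a Q \<longleftrightarrow> \<Phi> < sum \<delta> Q" if "Q \<subseteq> {1..n}" for Q
    using sufficient_iff_Phi_less_sum_delta[OF d a that] by (simp add: \<Phi>_def \<delta>_def)
  have suff_P: "sufficient n d w0 v a P" using sufficient[OF P(1)] P(3)[of \<delta>] threshold(1) by simp
  have min_card_P: "card P \<le> card Q" if "Q \<subseteq> {1..n}" "\<Phi> < sum \<delta> Q" for Q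
    using min_card[OF that] P(2) by simp
  note PI = PI_explanation_of_min_card_sufficient[OF P(1) suff_P min_card_P[OF _ sufficient[THEN iffD1]]]
  show ?thesis
  proof (rule exI[of _ k], unfold Let_def P_def[symmetric] \<delta>_def[symmetric] \<Phi>_def[symmetric],
      intro conjI allI impI PI kn threshold(1))
    show "(\<Sum>r=1..k-1. \<delta> (l r)) \<le> \<Phi>" if "1 \<le> k" using threshold(2) that by simp
    show "k' = k" if "k' \<le> n \<and> \<Phi> < (\<Sum>r=1..k'. \<delta> (l r)) \<and> (1 \<le> k' \<longrightarrow> (\<Sum>r=1..k'-1. \<delta> (l r)) \<le> \<Phi>)"
      for k'
      using that by (intro threshold(3)) auto
    show "\<forall>e\<in>feature_space n d. (\<forall>j\<in>P. e j = a j) \<longrightarrow> 0 < score n w0 v e"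
      using suff_P by (simp add: sufficient_def)
    show "\<Phi> < (\<Sum>i=1..n. \<delta> i * (if i \<in> P then 1 else 0))"
      using sum_mult_indicator[OF _ P(1), of \<delta>] P(3)[of \<delta>] threshold(1) by simp
    show "(\<Sum>i=1..n. if i \<in> P then 1 else 0) \<le> (\<Sum>i=1..n. p i)"
      if "(\<forall>i\<in>{1..n}. p i \<in> {0, 1}) \<and> \<Phi> < (\<Sum>i=1..n. \<delta> i * p i)" for p :: "nat \<Rightarrow> real"
      using that by (intro zero_one_solution_card_ge[OF _ P(1) min_card_P]) auto
  qed
qed

end
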